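(* Let $Y^1,\dots,Y^M$ be i.i.d. $\mathbb{R}^d$-valued random variables with law $\mu$, where $\mu$ has density $m$. Assume there exist $\alpha>0$, $\kappa\ge1$ and a probability measure $\gamma(dx)=q(x)dx$ on $\mathbb{R}^d$ satisfying a logarithmic Sobolev inequality with constant $\alpha$ and such that $m(x)\le\kappa q(x)$ for all $x\in\mathbb{R}^d$. Then for every Lipschitz continuous $f:\mathbb{R}^d\to\mathbb{R}$ with $|\nabla f|_\infty\le1$, $$\forall r>0,\ M\ge1,\quad\mathbb{P}\left[\left|\frac1M\sum_{k=1}^Mf(Y^k)-\mathbb{E}[f(Y^1)]\right|\ge r+\delta_{\kappa,\alpha}\right]\le2e^{-M\frac{r^2}{\alpha}},$$ with $\delta_{\kappa,\alpha}=2\sqrt{\alpha\log\kappa}$.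
   Context: $\gamma$ satisfies a logarithmic Sobolev inequality with constant $\alpha$ if for all $f\in H^1(d\gamma)=\{g\in L^2(d\gamma):\int|\nabla g|^2d\gamma<\infty\}$ with $f\ge0$, $\mathrm{Ent}_\gamma(f^2)\le\alpha\int|\nabla f|^2d\gamma$, where $\mathrm{Ent}_\gamma(\phi)=\int\phi\log\phi\,d\gamma-(\int\phi\,d\gamma)\log(\int\phi\,d\gamma)$. $|\nabla f|_\infty$ is the essential supremum of the Euclidean norm of the gradient. *)

theory Defs
  imports "HOL-Analysis.Analysis" "HOL-Probability.Probability"
begin

text \<open>Classical gradient of a real function on a Euclidean space; set to 0 at points
  of non-differentiability (these form a Lebesgue-null set for the locally Lipschitz
  functions considered below, by Rademacher's theorem).\<close>
definition grad :: "('a::euclidean_space \<Rightarrow> real) \<Rightarrow> 'a \<Rightarrow> 'a" where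
  "grad f x = (if f differentiable (at x)
               then (SOME g. (f has_derivative (\<lambda>h. g \<bullet> h)) (at x)) else 0)"

definition grad_sup_norm :: "('a::euclidean_space \<Rightarrow> real) \<Rightarrow> ereal" where
  "grad_sup_norm f = esssup lborel (\<lambda>x. ereal (norm (grad f x)))"

definition Ent :: "'a measure \<Rightarrow> ('a \<Rightarrow> real) \<Rightarrow> real" where
  "Ent \<gamma> \<phi> = (\<integral>x. \<phi> x * ln (\<phi> x) \<partial>\<gamma>)
               - (\<integral>x. \<phi> x \<partial>\<gamma>) * ln (\<integral>x. \<phi> x \<partial>\<gamma>)"

text \<open>The class H^1(d gamma) realised through locally Lipschitz functions with classical
  (a.e.) gradients: f in L^2(gamma) and |grad f| in L^2(gamma).\<close>
definition H1 :: "'a::euclidean_space measure \<Rightarrow> ('a \<Rightarrow> real) set" where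
  "H1 \<gamma> = {g. (\<forall>x. \<exists>e>0. \<exists>L. L-lipschitz_on (ball x e) g)
              \<and> integrable \<gamma> (\<lambda>x. (g x)\<^sup>2)
              \<and> integrable \<gamma> (\<lambda>x. (norm (grad g x))\<^sup>2)}"

definition LSI :: "'a::euclidean_space measure \<Rightarrow> real \<Rightarrow> bool" where
  "LSI \<gamma> \<alpha> \<longleftrightarrow> (\<forall>f \<in> H1 \<gamma>. (\<forall>x. f x \<ge> 0) \<longrightarrow>
      integrable \<gamma> (\<lambda>x. (f x)\<^sup>2 * ln ((f x)\<^sup>2)) \<and>
      Ent \<gamma> (\<lambda>x. (f x)\<^sup>2) \<le> \<alpha> * (\<integral>x. (norm (grad f x))\<^sup>2 \<partial>\<gamma>))"

end

theory Submission
  imports Defs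
begin

(*
  Herbst's argument.  For bounded h with |grad h| \<le> 1, the logarithmic Sobolev inequality
  applied to exp (t h / 2) reads t \<Lambda>' t - \<Lambda> t \<le> \<alpha> t\<^sup>2 / 4 for the log-Laplace
  transform \<Lambda> t = ln E exp (t h) under \<gamma>.  Hence (\<Lambda> t - t E h - \<alpha> t\<^sup>2 / 4) / t is
  nonincreasing on (0, \<infinity>) with limit 0 at 0, i.e. E exp (t (h - E h)) \<le> exp (\<alpha> t\<^sup>2 / 4).
  Truncating a Lipschitz f and letting the truncated means converge along a subsequence gives the
  same bound for f around some centre c.  The density bound m \<le> \<kappa> q transfers it to the law
  of Y at the cost of a factor \<kappa>, which keeps c within sqrt (\<alpha> ln \<kappa>) of E f(Y^1); a
  Chernoff bound for the independent sum with parameter 2 (r + sqrt (\<alpha> ln \<kappa>)) / \<alpha>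
  concludes.
*)

section \<open>Elementary real analysis\<close>

lemma mult_le_abs_bound:
  fixes l y B :: real
  assumes "\<bar>y\<bar> \<le> B"
  shows "l * y \<le> \<bar>l\<bar> * B"
proof -
  have "l * y \<le> \<bar>l\<bar> * \<bar>y\<bar>"
    using abs_ge_self[of "l * y"] by (simp add: abs_mult)
  also have "\<dots> \<le> \<bar>l\<bar> * B"
    using assms by (rule mult_left_mono) simp
  finally show ?thesis .
qed

lemma abs_exp_minus_one_minus_le:
  fixes v :: real
  shows "\<bar>exp v - 1 - v\<bar> \<le> v\<^sup>2 * exp \<bar>v\<bar>"
proof -
  have lower: "0 \<le> exp v - 1 - v"
    using exp_ge_add_one_self[of v] by linarith
  have "(1 - v) * exp v \<le> exp (-v) * exp v"
    using exp_ge_add_one_self[of "-v"] by (intro mult_right_mono) auto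
  then have upper: "exp v - 1 - v \<le> v * (exp v - 1)"
    by (simp add: exp_minus field_simps)
  have "v * (exp v - 1) \<le> v\<^sup>2 * exp \<bar>v\<bar>"
  proof (cases "v \<ge> 0")
    case True
    with upper have "v * (exp v - 1) \<le> v * (v * exp v)"
      by (intro mult_left_mono) (auto simp: algebra_simps)
    with True show ?thesis
      by (simp add: power2_eq_square)
  next
    case False
    have "v * (exp v - 1) \<le> v * v"
      by (rule mult_left_mono_neg) (use exp_ge_add_one_self[of v] False in linarith)+
    also have "\<dots> \<le> v\<^sup>2 * exp \<bar>v\<bar>"
      using mult_left_mono[of 1 "exp \<bar>v\<bar>" "v * v"] by (simp add: power2_eq_square)
    finally show ?thesis .
  qed
  with lower upper show ?thesis
    by simp
qed

lemma le_of_linear_le_quadratic: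
  fixes x s \<alpha> :: real
  assumes "\<alpha> > 0" and "s \<ge> 0"
    and bound: "\<And>l. l > 0 \<Longrightarrow> l * x \<le> s\<^sup>2 / \<alpha> + \<alpha> * l\<^sup>2 / 4"
  shows "x \<le> s"
proof (rule ccontr)
  assume "\<not> x \<le> s"
  with \<open>s \<ge> 0\<close> have "x > 0"
    by simp
  have e1: "2 * x / \<alpha> * x = 2 * (x\<^sup>2 / \<alpha>)" and e2: "\<alpha> * (2 * x / \<alpha>)\<^sup>2 / 4 = x\<^sup>2 / \<alpha>"
    using \<open>\<alpha> > 0\<close> by (simp_all add: power2_eq_square)
  have "2 * x / \<alpha> * x \<le> s\<^sup>2 / \<alpha> + \<alpha> * (2 * x / \<alpha>)\<^sup>2 / 4"
    using \<open>x > 0\<close> \<open>\<alpha> > 0\<close> by (intro bound) simp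
  then have "x\<^sup>2 / \<alpha> \<le> s\<^sup>2 / \<alpha>"
    unfolding e1 e2 by linarith
  with \<open>\<alpha> > 0\<close> have "x\<^sup>2 \<le> s\<^sup>2"
    by (simp add: divide_le_cancel)
  with \<open>s \<ge> 0\<close> \<open>\<not> x \<le> s\<close> show False
    using power2_le_imp_le by blast
qed

lemma exp_chernoff_bound_le:
  fixes \<alpha> \<kappa> r t :: real
  assumes "\<alpha> > 0" and "\<kappa> > 0" and t: "r\<^sup>2 + \<alpha> * ln \<kappa> \<le> t\<^sup>2"
  shows "exp (- (2 * t / \<alpha>) * (real n * t)) * (\<kappa> * exp (\<alpha> * (2 * t / \<alpha>)\<^sup>2 / 4)) ^ n
         \<le> exp (- real n * r\<^sup>2 / \<alpha>)"
proof -
  have "\<kappa> * exp (\<alpha> * (2 * t / \<alpha>)\<^sup>2 / 4) = exp (ln \<kappa> + t\<^sup>2 / \<alpha>)"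
    using assms(1,2) by (simp add: exp_add power2_eq_square)
  then have "exp (- (2 * t / \<alpha>) * (real n * t)) * (\<kappa> * exp (\<alpha> * (2 * t / \<alpha>)\<^sup>2 / 4)) ^ n
      = exp (real n * (ln \<kappa> - t\<^sup>2 / \<alpha>))"
    using assms(1) by (simp add: power2_eq_square algebra_simps flip: exp_of_nat_mult exp_add)
  also have "\<dots> \<le> exp (real n * (- (r\<^sup>2 / \<alpha>)))"
  proof -
    have "ln \<kappa> - t\<^sup>2 / \<alpha> = (\<alpha> * ln \<kappa> - t\<^sup>2) / \<alpha>"
      using \<open>\<alpha> > 0\<close> by (simp add: field_simps)
    also have "\<dots> \<le> (- r\<^sup>2) / \<alpha>"
      using t \<open>\<alpha> > 0\<close> by (intro divide_right_mono) auto
    finally have "ln \<kappa> - t\<^sup>2 / \<alpha> \<le> - (r\<^sup>2 / \<alpha>)"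
      by simp
    then have "real n * (ln \<kappa> - t\<^sup>2 / \<alpha>) \<le> real n * (- (r\<^sup>2 / \<alpha>))"
      by (rule mult_left_mono) simp
    then show ?thesis
      by simp
  qed
  finally show ?thesis
    by simp
qed

lemma has_real_derivative_of_quadratic_remainder:
  fixes F :: "real \<Rightarrow> real"
  assumes "\<And>l. \<bar>l - l0\<bar> \<le> 1 \<Longrightarrow> \<bar>F l - F l0 - (l - l0) * D\<bar> \<le> C * (l - l0)\<^sup>2"
  shows "(F has_real_derivative D) (at l0)"
proof -
  have "\<bar>(F l - F l0) / (l - l0) - D\<bar> \<le> C * \<bar>l - l0\<bar>" if "\<bar>l - l0\<bar> < 1" "l \<noteq> l0" for l
  proof -
    have "\<bar>F l - F l0 - (l - l0) * D\<bar> \<le> C * \<bar>l - l0\<bar> * \<bar>l - l0\<bar>"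
      using assms[of l] that(1) by (simp add: power2_eq_square mult.assoc)
    moreover have "(F l - F l0) / (l - l0) - D = (F l - F l0 - (l - l0) * D) / (l - l0)"
      using that(2) by (simp add: field_simps)
    ultimately show ?thesis
      using that(2) by (simp add: abs_divide pos_divide_le_eq)
  qed
  then have "\<forall>\<^sub>F l in at l0. norm ((F l - F l0) / (l - l0) - D) \<le> C * \<bar>l - l0\<bar>"
    unfolding eventually_at by (intro exI[of _ 1]) (auto simp: dist_real_def)
  moreover have "((\<lambda>l. C * \<bar>l - l0\<bar>) \<longlongrightarrow> 0) (at l0)"
    by (rule tendsto_eq_intros refl)+ simp
  ultimately have "((\<lambda>l. (F l - F l0) / (l - l0) - D) \<longlongrightarrow> 0) (at l0)"
    by (rule Lim_null_comparison)
  then show ?thesis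
    by (simp add: has_field_derivative_iff LIM_zero_iff)
qed

lemma nonpos_of_deriv_quotient_nonpos:
  fixes G G' :: "real \<Rightarrow> real"
  assumes deriv: "\<And>t. (G has_real_derivative G' t) (at t)"
    and "G 0 = 0" and "G' 0 = 0"
    and quotient: "\<And>t. t > 0 \<Longrightarrow> t * G' t - G t \<le> 0"
    and "l > 0"
  shows "G l \<le> 0"
proof -
  define H where "H t = G t / t" for t
  have H_antimono: "H l \<le> H e" if "0 < e" "e \<le> l" for e
  proof (rule DERIV_nonpos_imp_nonincreasing[where f=H, OF \<open>e \<le> l\<close>])
    fix t assume "e \<le> t" "t \<le> l"
    with \<open>0 < e\<close> have "t > 0" by simp
    have "(H has_real_derivative (G' t * t - G t * 1) / (t * t)) (at t)"
      unfolding H_def[abs_def] using \<open>t > 0\<close> by (intro DERIV_divide deriv DERIV_ident) simp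
    moreover have "(G' t * t - G t * 1) / (t * t) \<le> 0"
      by (rule divide_nonpos_pos) (use quotient[OF \<open>t > 0\<close>] \<open>t > 0\<close> in \<open>simp_all add: mult.commute\<close>)
    ultimately show "\<exists>y. (H has_real_derivative y) (at t) \<and> y \<le> 0"
      by blast
  qed
  have "((\<lambda>e. (G e - G 0) / (e - 0)) \<longlongrightarrow> G' 0) (at 0)"
    using deriv[of 0] unfolding has_field_derivative_iff .
  then have "(H \<longlongrightarrow> 0) (at_right 0)"
    unfolding H_def[abs_def] using assms(2,3) by (auto intro: tendsto_mono[OF at_le])
  moreover have "\<forall>\<^sub>F e in at_right 0. e < l"
    unfolding eventually_at_right[OF \<open>l > 0\<close>] using \<open>l > 0\<close> by blast
  with eventually_at_right_less[of 0] have "\<forall>\<^sub>F e in at_right 0. H l \<le> H e"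
    by eventually_elim (use H_antimono in auto)
  ultimately have "H l \<le> 0"
    by (intro tendsto_le[of "at_right 0" H 0 "\<lambda>_. H l"]) auto
  with \<open>l > 0\<close> show ?thesis
    by (simp add: H_def divide_le_0_iff)
qed

definition clamp :: "real \<Rightarrow> real \<Rightarrow> real" where
  "clamp n a = max (- n) (min n a)"

lemma clamp_eq_self: "\<bar>a\<bar> \<le> n \<Longrightarrow> clamp n a = a"
  by (simp add: clamp_def)

lemma abs_clamp_le: "0 \<le> n \<Longrightarrow> \<bar>clamp n a\<bar> \<le> n"
  by (simp add: clamp_def)

lemma LIMSEQ_clamp: "(\<lambda>n. clamp (real n) a) \<longlonglongrightarrow> a"
proof (rule tendsto_eventually)
  obtain N :: nat where "\<bar>a\<bar> \<le> real N"
    using real_arch_simple by blast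
  then show "\<forall>\<^sub>F n in sequentially. clamp (real n) a = a"
    unfolding eventually_sequentially by (intro exI[of _ N]) (auto simp: clamp_eq_self)
qed

section \<open>Gradients and Lipschitz functions\<close>

lemma grad_eqI:
  fixes f :: "'a::euclidean_space \<Rightarrow> real"
  assumes "(f has_derivative (\<lambda>v. w \<bullet> v)) (at x)"
  shows "grad f x = w"
proof -
  let ?g = "SOME g. (f has_derivative (\<lambda>v. g \<bullet> v)) (at x)"
  have "(f has_derivative (\<lambda>v. ?g \<bullet> v)) (at x)"
    using assms by (rule someI)
  with assms have "(\<lambda>v. ?g \<bullet> v) = (\<lambda>v. w \<bullet> v)"
    using has_derivative_unique by blast
  then have "(?g - w) \<bullet> (?g - w) = 0"
    by (metis inner_diff_left right_minus_eq)
  then have "?g = w"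
    by simp
  moreover have "f differentiable (at x)"
    using assms by (auto simp: differentiable_def)
  ultimately show ?thesis
    by (simp add: grad_def)
qed

lemma grad_not_differentiable: "\<not> f differentiable (at x) \<Longrightarrow> grad f x = 0"
  by (simp add: grad_def)

lemma has_derivative_grad:
  fixes f :: "'a::euclidean_space \<Rightarrow> real"
  assumes "f differentiable (at x)"
  shows "(f has_derivative (\<lambda>v. grad f x \<bullet> v)) (at x)"
proof -
  obtain D where D: "(f has_derivative D) (at x)"
    using assms by (auto simp: differentiable_def)
  then have lin: "linear D"
    by (rule has_derivative_linear)
  define w where "w = (\<Sum>b\<in>Basis. D b *\<^sub>R b)"
  have D_eq: "D v = w \<bullet> v" for v
  proof -
    have "D v = D (\<Sum>b\<in>Basis. (v \<bullet> b) *\<^sub>R b)"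
      by (simp add: euclidean_representation)
    also have "\<dots> = (\<Sum>b\<in>Basis. (v \<bullet> b) * D b)"
      using lin by (simp add: linear_sum linear_scale)
    also have "\<dots> = w \<bullet> v"
      by (simp add: w_def inner_sum_right inner_commute mult.commute)
    finally show ?thesis .
  qed
  from D have "(f has_derivative (\<lambda>v. w \<bullet> v)) (at x)"
    unfolding D_eq[abs_def] .
  moreover from this have "grad f x = w"
    by (rule grad_eqI)
  ultimately show ?thesis
    by simp
qed

lemma grad_eq_on_open:
  fixes g h :: "'a::euclidean_space \<Rightarrow> real"
  assumes U: "open U" "x \<in> U" and eq: "\<And>y. y \<in> U \<Longrightarrow> g y = h y"
  shows "grad g x = grad h x"
proof -
  have transfer: "grad g' x = grad h' x"
    if "h' differentiable (at x)" "\<And>y. y \<in> U \<Longrightarrow> g' y = h' y" for g' h' :: "'a \<Rightarrow> real"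
  proof -
    have "(g' has_derivative (\<lambda>v. grad h' x \<bullet> v)) (at x)"
      using has_derivative_grad[OF that(1)] U by (rule has_derivative_transform_within_open) (simp add: that(2))
    then show ?thesis
      by (rule grad_eqI)
  qed
  have eq': "\<And>y. y \<in> U \<Longrightarrow> h y = g y"
    using eq by simp
  show ?thesis
  proof (cases "h differentiable (at x)")
    case True
    then show ?thesis
      using eq by (rule transfer)
  next
    case h_nondiff: False
    show ?thesis
    proof (cases "g differentiable (at x)")
      case True
      from transfer[OF this eq'] show ?thesis
        by simp
    next
      case False
      with h_nondiff show ?thesis
        by (simp add: grad_not_differentiable)
    qed
  qed
qed

lemma grad_eq_0_at_extremum:
  fixes g :: "'a::euclidean_space \<Rightarrow> real"
  assumes "(\<forall>y. g y \<le> g x) \<or> (\<forall>y. g x \<le> g y)"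
  shows "grad g x = 0"
proof (cases "g differentiable (at x)")
  case True
  note D = has_derivative_grad[OF True]
  from assms have "(\<lambda>v. grad g x \<bullet> v) = (\<lambda>v. 0)"
  proof
    assume "\<forall>y. g y \<le> g x"
    then show ?thesis
      by (intro has_derivative_local_max[OF D] always_eventually) auto
  next
    assume "\<forall>y. g x \<le> g y"
    then show ?thesis
      by (intro has_derivative_local_min[OF D] always_eventually) auto
  qed
  then show ?thesis
    by (metis inner_eq_zero_iff)
qed (rule grad_not_differentiable)

lemma differentiable_at_iff_comp_exp:
  fixes h :: "'a::euclidean_space \<Rightarrow> real"
  assumes "c \<noteq> 0"
  shows "(\<lambda>x. exp (c * h x)) differentiable (at x) \<longleftrightarrow> h differentiable (at x)"
proof
  assume "(\<lambda>x. exp (c * h x)) differentiable (at x)"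
  then obtain D where "((\<lambda>x. exp (c * h x)) has_derivative D) (at x)"
    by (auto simp: differentiable_def)
  from DERIV_compose_FDERIV[OF DERIV_ln[OF exp_gt_zero] this]
  have "((\<lambda>y. c * h y) has_derivative (\<lambda>v. D v * inverse (exp (c * h x)))) (at x)"
    by simp
  then have "((\<lambda>y. (1 / c) * (c * h y)) has_derivative (\<lambda>v. (1 / c) * (D v * inverse (exp (c * h x))))) (at x)"
    by (rule has_derivative_mult_right)
  then show "h differentiable (at x)"
    using assms by (auto simp: differentiable_def)
next
  assume "h differentiable (at x)"
  from has_derivative_grad[OF this]
  have "((\<lambda>x. exp (c * h x)) has_derivative (\<lambda>v. exp (c * h x) * (c * (grad h x \<bullet> v)))) (at x)"
    by (auto intro!: derivative_eq_intros)
  then show "(\<lambda>x. exp (c * h x)) differentiable (at x)"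
    by (auto simp: differentiable_def)
qed

lemma grad_exp_scaled:
  fixes h :: "'a::euclidean_space \<Rightarrow> real"
  shows "grad (\<lambda>x. exp (c * h x)) x = (c * exp (c * h x)) *\<^sub>R grad h x"
proof (cases "c = 0")
  case True
  have "((\<lambda>x. exp (c * h x)) has_derivative (\<lambda>v. 0 \<bullet> v)) (at x)"
    using True by simp
  then show ?thesis
    using True by (simp add: grad_eqI)
next
  case c: False
  show ?thesis
  proof (cases "h differentiable (at x)")
    case True
    have "((\<lambda>x. exp (c * h x)) has_derivative (\<lambda>v. exp (c * h x) * (c * (grad h x \<bullet> v)))) (at x)"
      using has_derivative_grad[OF True] by (auto intro!: derivative_eq_intros)
    then show ?thesis
      by (intro grad_eqI) (simp add: algebra_simps)
  next
    case False
    then have "\<not> (\<lambda>x. exp (c * h x)) differentiable (at x)"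
      using differentiable_at_iff_comp_exp[OF c] by blast
    with False show ?thesis
      by (simp add: grad_not_differentiable)
  qed
qed

lemma grad_uminus: "grad (\<lambda>x. - h x) x = - grad h x"
proof (cases "h differentiable (at x)")
  case True
  have "((\<lambda>x. - h x) has_derivative (\<lambda>v. (- grad h x) \<bullet> v)) (at x)"
    using has_derivative_grad[OF True] by (auto intro!: derivative_eq_intros)
  then show ?thesis
    by (rule grad_eqI)
next
  case False
  have "\<not> (\<lambda>x. - h x) differentiable (at x)"
  proof
    assume "(\<lambda>x. - h x) differentiable (at x)"
    then have "(\<lambda>x. - (- h x)) differentiable (at x)"
      by (rule differentiable_minus)
    with False show False
      by simp
  qed
  with False show ?thesis
    by (simp add: grad_not_differentiable)
qed

lemma grad_clamp:
  fixes h :: "'a::euclidean_space \<Rightarrow> real"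
  assumes "continuous_on UNIV h"
  shows "grad (\<lambda>x. clamp n (h x)) x = (if \<bar>h x\<bar> < n then grad h x else 0)"
proof (cases "\<bar>h x\<bar> < n")
  case True
  have "open {y. \<bar>h y\<bar> < n}"
    using assms by (intro open_Collect_less) (auto intro!: continuous_intros)
  with True show ?thesis
    by (subst grad_eq_on_open[of "{y. \<bar>h y\<bar> < n}"]) (auto simp: clamp_eq_self)
next
  case False
  then consider "n \<le> h x" | "h x \<le> -n"
    by linarith
  then have "(\<forall>y. clamp n (h y) \<le> clamp n (h x)) \<or> (\<forall>y. clamp n (h x) \<le> clamp n (h y))"
    by cases (simp_all add: clamp_def max_def min_def)
  with False show ?thesis
    by (simp add: grad_eq_0_at_extremum)
qed

lemma grad_sup_norm_le_oneD:
  fixes f :: "'a::euclidean_space \<Rightarrow> real"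
  assumes "grad_sup_norm f \<le> 1"
  shows "(\<lambda>x. norm (grad f x)) \<in> borel_measurable borel"
    and "AE x in lborel. norm (grad f x) \<le> 1"
proof -
  have "(\<lambda>x. ereal (norm (grad f x))) \<in> borel_measurable lborel"
  proof (rule ccontr)
    assume "(\<lambda>x. ereal (norm (grad f x))) \<notin> borel_measurable lborel"
    then have "grad_sup_norm f = \<infinity>"
      unfolding grad_sup_norm_def by (simp add: esssup_non_measurable top_ereal_def)
    with assms show False
      by simp
  qed
  then show "(\<lambda>x. norm (grad f x)) \<in> borel_measurable borel"
    by (simp add: borel_measurable_ereal_iff)
  show "AE x in lborel. norm (grad f x) \<le> 1"
    using esssup_AE[of "\<lambda>x. ereal (norm (grad f x))" lborel]
  proof eventually_elim
    case (elim x)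
    then have "ereal (norm (grad f x)) \<le> 1"
      using assms unfolding grad_sup_norm_def by (rule order_trans)
    then show ?case
      by simp
  qed
qed

lemma lipschitz_on_clamp:
  fixes h :: "'a::metric_space \<Rightarrow> real"
  assumes "L-lipschitz_on S h"
  shows "L-lipschitz_on S (\<lambda>x. clamp n (h x))"
proof (rule lipschitz_onI)
  fix x y
  assume "x \<in> S" "y \<in> S"
  have "\<bar>clamp n a - clamp n b\<bar> \<le> \<bar>a - b\<bar>" for a b :: real
    by (simp add: clamp_def abs_if max_def min_def)
  then have "dist (clamp n (h x)) (clamp n (h y)) \<le> dist (h x) (h y)"
    by (simp add: dist_real_def)
  also have "\<dots> \<le> L * dist x y"
    using assms \<open>x \<in> S\<close> \<open>y \<in> S\<close> by (rule lipschitz_onD)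
  finally show "dist (clamp n (h x)) (clamp n (h y)) \<le> L * dist x y" .
qed (rule lipschitz_on_nonneg[OF assms])

lemma lipschitz_on_exp_atMost: "(exp K)-lipschitz_on {..K} exp"
proof (rule lipschitz_onI)
  have "exp b - exp a \<le> exp K * (b - a)" if "a \<le> b" "b \<le> K" for a b :: real
  proof -
    have "1 - exp (a - b) \<le> b - a"
      using exp_ge_add_one_self[of "a - b"] by linarith
    then have "exp b * (1 - exp (a - b)) \<le> exp b * (b - a)"
      by (rule mult_left_mono) simp
    also have "\<dots> \<le> exp K * (b - a)"
      using that by (intro mult_right_mono) auto
    finally show ?thesis
      by (simp add: algebra_simps flip: exp_add)
  qed
  note exp_le = this
  show "dist (exp x) (exp y) \<le> exp K * dist x y" if "x \<in> {..K}" "y \<in> {..K}" for x y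
    using that exp_le[of x y] exp_le[of y x] by (cases "x \<le> y") (auto simp: dist_real_def abs_if algebra_simps)
qed simp

lemma lipschitz_on_exp_comp_bounded:
  assumes "L-lipschitz_on UNIV h" and "\<And>x. \<bar>h x\<bar> \<le> B"
  shows "(exp (\<bar>c\<bar> * B) * (\<bar>c\<bar> * L))-lipschitz_on UNIV (\<lambda>x. exp (c * h x))"
proof -
  have "(exp (\<bar>c\<bar> * B))-lipschitz_on ((\<lambda>x. c * h x) ` UNIV) exp"
    using mult_le_abs_bound[OF assms(2)]
    by (intro lipschitz_on_subset[OF lipschitz_on_exp_atMost]) auto
  with lipschitz_on_cmult_real[OF assms(1)] show ?thesis
    using lipschitz_on_compose2 by fastforce
qed

section \<open>Laplace transforms\<close>

lemma nn_integral_le_of_tendsto: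
  fixes u :: "nat \<Rightarrow> 'a \<Rightarrow> ennreal"
  assumes "\<And>k. u k \<in> borel_measurable M"
    and "\<And>x. (\<lambda>k. u k x) \<longlonglongrightarrow> v x"
    and "\<And>k. (\<integral>\<^sup>+x. u k x \<partial>M) \<le> C"
  shows "(\<integral>\<^sup>+x. v x \<partial>M) \<le> C"
proof -
  have "(\<integral>\<^sup>+x. v x \<partial>M) = (\<integral>\<^sup>+x. liminf (\<lambda>k. u k x) \<partial>M)"
  proof (rule nn_integral_cong)
    show "v x = liminf (\<lambda>k. u k x)" for x
      using lim_imp_Liminf[OF _ assms(2)] by simp
  qed
  also have "\<dots> \<le> liminf (\<lambda>k. \<integral>\<^sup>+x. u k x \<partial>M)"
    using assms(1) by (rule nn_integral_liminf)
  also have "\<dots> \<le> limsup (\<lambda>k. \<integral>\<^sup>+x. u k x \<partial>M)"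
    by (rule Liminf_le_Limsup) simp
  also have "\<dots> \<le> C"
    using assms(3) by (intro Limsup_bounded always_eventually) auto
  finally show ?thesis .
qed

lemma nn_integral_distributed_le_density:
  fixes g :: "'a::euclidean_space \<Rightarrow> ennreal"
  assumes law: "distributed P lborel Y (\<lambda>x. ennreal (m x))"
    and dom: "\<And>x. m x \<le> \<kappa> * q x" and "\<kappa> \<ge> 0" and "\<And>x. q x \<ge> 0"
    and q_meas: "q \<in> borel_measurable lborel" and g_meas: "g \<in> borel_measurable lborel"
  shows "(\<integral>\<^sup>+\<omega>. g (Y \<omega>) \<partial>P) \<le> ennreal \<kappa> * (\<integral>\<^sup>+x. g x \<partial>density lborel (\<lambda>x. ennreal (q x)))"
proof -
  have "(\<integral>\<^sup>+\<omega>. g (Y \<omega>) \<partial>P) = (\<integral>\<^sup>+x. ennreal (m x) * g x \<partial>lborel)"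
    using distributed_nn_integral[OF law g_meas] by simp
  also have "\<dots> \<le> (\<integral>\<^sup>+x. ennreal \<kappa> * (ennreal (q x) * g x) \<partial>lborel)"
  proof (rule nn_integral_mono)
    fix x
    have "ennreal (m x) \<le> ennreal \<kappa> * ennreal (q x)"
      using dom[of x] \<open>\<kappa> \<ge> 0\<close> \<open>q x \<ge> 0\<close> by (simp add: ennreal_mult[symmetric] ennreal_leI)
    then show "ennreal (m x) * g x \<le> ennreal \<kappa> * (ennreal (q x) * g x)"
      by (simp add: mult.assoc[symmetric] mult_right_mono)
  qed
  also have "\<dots> = ennreal \<kappa> * (\<integral>\<^sup>+x. g x \<partial>density lborel (\<lambda>x. ennreal (q x)))"
    using q_meas g_meas by (simp add: nn_integral_cmult nn_integral_density)
  finally show ?thesis .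
qed

lemma mgf_distributed_le_of_density:
  fixes f :: "'a::euclidean_space \<Rightarrow> real"
  assumes law: "distributed P lborel Y (\<lambda>x. ennreal (m x))"
    and dom: "\<And>x. m x \<le> \<kappa> * q x" and "\<kappa> \<ge> 0" and "\<And>x. q x \<ge> 0"
    and q_meas: "q \<in> borel_measurable lborel" and [measurable]: "f \<in> borel_measurable borel"
    and bound: "(\<integral>\<^sup>+x. ennreal (exp (l * (f x - c))) \<partial>density lborel (\<lambda>x. ennreal (q x))) \<le> ennreal B"
  shows "(\<integral>\<^sup>+\<omega>. ennreal (exp (l * (f (Y \<omega>) - c))) \<partial>P) \<le> ennreal (\<kappa> * B)"
proof -
  have "(\<integral>\<^sup>+\<omega>. ennreal (exp (l * (f (Y \<omega>) - c))) \<partial>P)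
      \<le> ennreal \<kappa> * (\<integral>\<^sup>+x. ennreal (exp (l * (f x - c))) \<partial>density lborel (\<lambda>x. ennreal (q x)))"
    using law dom \<open>\<kappa> \<ge> 0\<close> assms(4) q_meas by (rule nn_integral_distributed_le_density) measurable
  also have "\<dots> \<le> ennreal (\<kappa> * B)"
    using bound \<open>\<kappa> \<ge> 0\<close> by (simp add: ennreal_mult' mult_left_mono)
  finally show ?thesis .
qed

context finite_measure
begin

lemma integrable_exp_mult_bounded:
  fixes h :: "'a \<Rightarrow> real"
  assumes "h \<in> borel_measurable M" and "\<And>x. \<bar>h x\<bar> \<le> B"
  shows "integrable M (\<lambda>x. exp (l * h x))"
    and "integrable M (\<lambda>x. h x * exp (l * h x))"
proof -
  have "B \<ge> 0"
    using assms(2)[of undefined] by simp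
  have B: "exp (l * h x) \<le> exp (\<bar>l\<bar> * B)" for x
    using mult_le_abs_bound[OF assms(2)] by simp
  show "integrable M (\<lambda>x. exp (l * h x))"
    using assms(1) B by (intro integrable_const_bound[where B="exp (\<bar>l\<bar> * B)"]) auto
  have "\<bar>h x\<bar> * exp (l * h x) \<le> B * exp (\<bar>l\<bar> * B)" for x
    using assms(2) B \<open>B \<ge> 0\<close> by (intro mult_mono) auto
  then show "integrable M (\<lambda>x. h x * exp (l * h x))"
    using assms(1) by (intro integrable_const_bound[where B="B * exp (\<bar>l\<bar> * B)"]) (auto simp: abs_mult)
qed

end

context prob_space
begin

lemma mgf_remainder_bound:
  fixes h :: "'a \<Rightarrow> real"
  assumes hm: "h \<in> borel_measurable M" and hB: "\<And>x. \<bar>h x\<bar> \<le> B" and l: "\<bar>l - l0\<bar> \<le> 1"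
  shows "\<bar>(\<integral>x. exp (l * h x) \<partial>M) - (\<integral>x. exp (l0 * h x) \<partial>M)
           - (l - l0) * (\<integral>x. h x * exp (l0 * h x) \<partial>M)\<bar>
         \<le> B\<^sup>2 * exp ((\<bar>l0\<bar> + 1) * B) * (l - l0)\<^sup>2"
    (is "\<bar>?\<Phi> l - ?\<Phi> l0 - (l - l0) * ?D\<bar> \<le> ?C * (l - l0)\<^sup>2")
proof -
  define R where "R x = exp (l * h x) - exp (l0 * h x) - (l - l0) * (h x * exp (l0 * h x))" for x
  have B0: "B \<ge> 0"
    using hB[of undefined] by simp
  have R_bound: "\<bar>R x\<bar> \<le> ?C * (l - l0)\<^sup>2" for x
  proof -
    define v where "v = (l - l0) * h x"
    have "R x = exp (l0 * h x) * (exp v - 1 - v)"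
      by (simp add: R_def v_def algebra_simps flip: exp_add)
    then have "\<bar>R x\<bar> \<le> exp (l0 * h x) * (v\<^sup>2 * exp \<bar>v\<bar>)"
      by (simp add: abs_mult abs_exp_minus_one_minus_le)
    also have "\<dots> \<le> exp (\<bar>l0\<bar> * B) * (((l - l0)\<^sup>2 * B\<^sup>2) * exp B)"
    proof (intro mult_mono)
      have "\<bar>v\<bar> \<le> 1 * B"
        unfolding v_def abs_mult using l hB[of x] B0 by (intro mult_mono) auto
      then show "exp \<bar>v\<bar> \<le> exp B"
        by simp
      show "v\<^sup>2 \<le> (l - l0)\<^sup>2 * B\<^sup>2"
        unfolding v_def power_mult_distrib using hB[of x]
        by (intro mult_left_mono) (auto simp: abs_le_square_iff[symmetric])
    qed (use mult_le_abs_bound[OF hB] in auto)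
    also have "\<dots> = ?C * (l - l0)\<^sup>2"
    proof -
      have "exp ((\<bar>l0\<bar> + 1) * B) = exp (\<bar>l0\<bar> * B) * exp B"
        by (simp add: distrib_right exp_add)
      then show ?thesis
        by (subst \<open>exp ((\<bar>l0\<bar> + 1) * B) = exp (\<bar>l0\<bar> * B) * exp B\<close>) (simp only: mult_ac)
    qed
    finally show ?thesis .
  qed
  have int: "integrable M (\<lambda>x. exp (t * h x))" "integrable M (\<lambda>x. h x * exp (t * h x))" for t
    using integrable_exp_mult_bounded[OF hm hB] by auto
  have "integrable M R"
    unfolding R_def using int by (intro Bochner_Integration.integrable_diff integrable_mult_right)
  have "\<bar>\<integral>x. R x \<partial>M\<bar> \<le> (\<integral>x. \<bar>R x\<bar> \<partial>M)"
    using integral_norm_bound[of M R] by simp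
  also have "\<dots> \<le> (\<integral>x. ?C * (l - l0)\<^sup>2 \<partial>M)"
    using \<open>integrable M R\<close> R_bound by (intro integral_mono) auto
  finally have "\<bar>\<integral>x. R x \<partial>M\<bar> \<le> (\<integral>x. ?C * (l - l0)\<^sup>2 \<partial>M)" .
  moreover have "(\<integral>x. R x \<partial>M) = ?\<Phi> l - ?\<Phi> l0 - (l - l0) * ?D"
    unfolding R_def using int by (simp add: Bochner_Integration.integral_diff)
  ultimately show ?thesis
    by (simp add: prob_space)
qed

lemma has_real_derivative_mgf:
  fixes h :: "'a \<Rightarrow> real"
  assumes "h \<in> borel_measurable M" and "\<And>x. \<bar>h x\<bar> \<le> B"
  shows "((\<lambda>l. \<integral>x. exp (l * h x) \<partial>M) has_real_derivative (\<integral>x. h x * exp (l0 * h x) \<partial>M)) (at l0)"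
  using mgf_remainder_bound[OF assms] by (rule has_real_derivative_of_quadratic_remainder)

lemma exp_expectation_le:
  fixes Y :: "'a \<Rightarrow> real"
  assumes "integrable M Y" and "integrable M (\<lambda>\<omega>. exp (Y \<omega>))"
  shows "exp (expectation Y) \<le> expectation (\<lambda>\<omega>. exp (Y \<omega>))"
proof -
  let ?b = "expectation Y"
  have "(\<integral>\<omega>. exp ?b * (1 + (Y \<omega> - ?b)) \<partial>M) = exp ?b * (1 + (?b - ?b))"
    using assms(1) by (simp add: prob_space)
  then have "exp ?b = (\<integral>\<omega>. exp ?b * (1 + (Y \<omega> - ?b)) \<partial>M)"
    by simp
  also have "\<dots> \<le> expectation (\<lambda>\<omega>. exp (Y \<omega>))"
  proof (rule integral_mono[OF _ assms(2)])
    show "integrable M (\<lambda>\<omega>. exp ?b * (1 + (Y \<omega> - ?b)))"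
      using assms(1) by simp
    show "exp ?b * (1 + (Y \<omega> - ?b)) \<le> exp (Y \<omega>)" for \<omega>
    proof -
      have "exp ?b * (1 + (Y \<omega> - ?b)) \<le> exp ?b * exp (Y \<omega> - ?b)"
        by (intro mult_left_mono) auto
      also have "\<dots> = exp (Y \<omega>)"
        by (simp flip: exp_add)
      finally show ?thesis .
    qed
  qed
  finally show ?thesis .
qed

lemma integrable_of_mgf_bound:
  fixes Z :: "'a \<Rightarrow> real"
  assumes [measurable]: "Z \<in> borel_measurable M"
    and mgf: "\<And>l. (\<integral>\<^sup>+\<omega>. ennreal (exp (l * (Z \<omega> - c))) \<partial>M) \<le> ennreal (C l)"
  shows "integrable M (\<lambda>\<omega>. exp (l * (Z \<omega> - c)))" and "integrable M Z"
proof -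
  show exp_int: "integrable M (\<lambda>\<omega>. exp (l * (Z \<omega> - c)))" for l
  proof (rule integrableI_bounded)
    have "(\<integral>\<^sup>+\<omega>. ennreal (norm (exp (l * (Z \<omega> - c)))) \<partial>M) \<le> ennreal (C l)"
      using mgf[of l] by simp
    also have "\<dots> < \<infinity>"
      by simp
    finally show "(\<integral>\<^sup>+\<omega>. ennreal (norm (exp (l * (Z \<omega> - c)))) \<partial>M) < \<infinity>" .
  qed measurable
  have "integrable M (\<lambda>\<omega>. Z \<omega> - c)"
  proof (rule Bochner_Integration.integrable_bound)
    show "integrable M (\<lambda>\<omega>. exp (1 * (Z \<omega> - c)) + exp ((-1) * (Z \<omega> - c)))"
      by (intro Bochner_Integration.integrable_add exp_int)
    have bound: "\<bar>z\<bar> \<le> \<bar>exp z + exp (- z)\<bar>" for z :: real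
    proof -
      have "z \<le> exp z" "- z \<le> exp (- z)"
        using exp_ge_add_one_self[of z] exp_ge_add_one_self[of "- z"] by linarith+
      then show ?thesis
        using exp_gt_zero[of z] exp_gt_zero[of "- z"] by linarith
    qed
    show "AE \<omega> in M. norm (Z \<omega> - c) \<le> norm (exp (1 * (Z \<omega> - c)) + exp ((-1) * (Z \<omega> - c)))"
    proof (rule AE_I2)
      show "norm (Z \<omega> - c) \<le> norm (exp (1 * (Z \<omega> - c)) + exp ((-1) * (Z \<omega> - c)))" for \<omega>
        using bound[of "Z \<omega> - c"] by simp
    qed
  qed measurable
  then have "integrable M (\<lambda>\<omega>. (Z \<omega> - c) + c)"
    by (intro Bochner_Integration.integrable_add) simp_all
  moreover have "(\<lambda>\<omega>. (Z \<omega> - c) + c) = Z"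
    by (rule ext) simp
  ultimately show "integrable M Z"
    by simp
qed

lemma abs_center_minus_expectation_le:
  fixes Z :: "'a \<Rightarrow> real"
  assumes Zm: "Z \<in> borel_measurable M"
    and mgf: "\<And>l. (\<integral>\<^sup>+\<omega>. ennreal (exp (l * (Z \<omega> - c))) \<partial>M) \<le> ennreal (\<kappa> * exp (\<alpha> * l\<^sup>2 / 4))"
    and "\<kappa> \<ge> 1" and "\<alpha> > 0"
  shows "\<bar>c - expectation Z\<bar> \<le> sqrt (\<alpha> * ln \<kappa>)"
proof -
  let ?s = "sqrt (\<alpha> * ln \<kappa>)"
  note int = integrable_of_mgf_bound[OF Zm mgf]
  have nonneg: "0 \<le> \<alpha> * ln \<kappa>"
    using \<open>\<alpha> > 0\<close> \<open>\<kappa> \<ge> 1\<close> by simp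
  then have s2: "?s\<^sup>2 / \<alpha> = ln \<kappa>"
    using \<open>\<alpha> > 0\<close> by simp
  have key: "l * (expectation Z - c) \<le> ?s\<^sup>2 / \<alpha> + \<alpha> * l\<^sup>2 / 4" for l
  proof -
    have "exp (l * (expectation Z - c)) = exp (expectation (\<lambda>\<omega>. l * (Z \<omega> - c)))"
      using int(2) by (simp add: prob_space right_diff_distrib)
    also have "\<dots> \<le> expectation (\<lambda>\<omega>. exp (l * (Z \<omega> - c)))"
      using int by (intro exp_expectation_le) auto
    also have "\<dots> \<le> \<kappa> * exp (\<alpha> * l\<^sup>2 / 4)"
      using mgf[of l] int(1)[of l] \<open>\<kappa> \<ge> 1\<close> by (simp add: nn_integral_eq_integral ennreal_le_iff)
    also have "\<dots> = exp (?s\<^sup>2 / \<alpha> + \<alpha> * l\<^sup>2 / 4)"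
      using \<open>\<kappa> \<ge> 1\<close> by (simp add: s2 exp_add)
    finally show ?thesis
      by simp
  qed
  have "expectation Z - c \<le> ?s"
    by (rule le_of_linear_le_quadratic[OF \<open>\<alpha> > 0\<close> _ key]) (simp add: nonneg)
  moreover have "c - expectation Z \<le> ?s"
  proof (rule le_of_linear_le_quadratic[OF \<open>\<alpha> > 0\<close>])
    show "l * (c - expectation Z) \<le> ?s\<^sup>2 / \<alpha> + \<alpha> * l\<^sup>2 / 4" for l
      using key[of "- l"] by (simp add: right_diff_distrib)
  qed (simp add: nonneg)
  ultimately show ?thesis
    by simp
qed

lemma ex_prob_abs_le_pos:
  fixes f :: "'a \<Rightarrow> real"
  assumes [measurable]: "f \<in> borel_measurable M"
  obtains K :: nat where "prob {x \<in> space M. \<bar>f x\<bar> \<le> real K} > 0"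
proof -
  have "(\<lambda>K. prob {x \<in> space M. \<bar>f x\<bar> \<le> real K}) \<longlonglongrightarrow> prob (\<Union>K. {x \<in> space M. \<bar>f x\<bar> \<le> real K})"
    by (intro finite_Lim_measure_incseq) (auto simp: incseq_def)
  moreover have "(\<Union>K. {x \<in> space M. \<bar>f x\<bar> \<le> real K}) = space M"
    using real_arch_simple by auto
  ultimately have "\<forall>\<^sub>F K in sequentially. prob {x \<in> space M. \<bar>f x\<bar> \<le> real K} > 0"
    by (intro order_tendstoD(1)) (auto simp: prob_space)
  then show ?thesis
    using that by (meson eventually_sequentially order_refl)
qed

lemma abs_center_le_of_mgf_le:
  fixes h :: "'a \<Rightarrow> real"
  assumes A: "A \<in> sets M" "prob A > 0" and hA: "\<And>x. x \<in> A \<Longrightarrow> \<bar>h x\<bar> \<le> K"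
    and int: "\<And>l. integrable M (\<lambda>x. exp (l * (h x - c)))"
    and mgf: "\<And>l. (\<integral>x. exp (l * (h x - c)) \<partial>M) \<le> exp (\<beta> * l\<^sup>2 / 4)"
  shows "\<bar>c\<bar> \<le> K + \<beta> / 4 - ln (prob A)"
proof -
  have "ln (prob A) - K - l * c \<le> \<beta> / 4" if l: "l = 1 \<or> l = -1" for l
  proof -
    have "exp (ln (prob A) + (- K - l * c)) = (\<integral>x. indicator A x * exp (- K - l * c) \<partial>M)"
      using A by (simp add: exp_add)
    also have "\<dots> \<le> (\<integral>x. exp (l * (h x - c)) \<partial>M)"
    proof (rule integral_mono[OF _ int])
      show "integrable M (\<lambda>x. indicator A x * exp (- K - l * c))"
        using A(1) by (intro integrable_mult_left) (simp add: emeasure_eq_measure)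
      show "indicator A x * exp (- K - l * c) \<le> exp (l * (h x - c))" for x
        using hA[of x] l by (auto simp: indicator_def algebra_simps abs_le_iff)
    qed
    also have "\<dots> \<le> exp (\<beta> / 4)"
      using mgf[of l] l by auto
    finally show ?thesis
      by simp
  qed
  from this[of 1] this[of "-1"] show ?thesis
    by auto
qed

end

section \<open>The Herbst argument\<close>

locale log_sobolev = prob_space M for M :: "'a::euclidean_space measure" +
  fixes \<alpha> :: real
  assumes sets_eq_borel: "sets M = sets borel"
    and LSI: "LSI M \<alpha>"
    and constant_nonneg: "\<alpha> \<ge> 0"
begin

lemma borel_measurable_continuous:
  "continuous_on UNIV h \<Longrightarrow> h \<in> borel_measurable M"
  unfolding measurable_cong_sets[OF sets_eq_borel refl]
  by (rule borel_measurable_continuous_onI)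

lemma entropy_mgf_le:
  fixes h :: "'a \<Rightarrow> real"
  assumes Lh: "L-lipschitz_on UNIV h" and hB: "\<And>x. \<bar>h x\<bar> \<le> B"
    and gm: "(\<lambda>x. norm (grad h x)) \<in> borel_measurable borel"
    and ae: "AE x in M. norm (grad h x) \<le> 1"
  shows "l * (\<integral>x. h x * exp (l * h x) \<partial>M) - (\<integral>x. exp (l * h x) \<partial>M) * ln (\<integral>x. exp (l * h x) \<partial>M)
         \<le> \<alpha> * l\<^sup>2 / 4 * (\<integral>x. exp (l * h x) \<partial>M)"
proof -
  define g where "g x = exp ((l/2) * h x)" for x
  have hm[measurable]: "h \<in> borel_measurable M"
    using Lh by (intro borel_measurable_continuous lipschitz_on_continuous_on)
  have gm'[measurable]: "(\<lambda>x. norm (grad h x)) \<in> borel_measurable M"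
    using gm by (simp add: measurable_cong_sets[OF sets_eq_borel refl])
  have g2: "(g x)\<^sup>2 = exp (l * h x)" for x
    by (simp add: g_def power2_eq_square flip: exp_add)
  have int_exp: "integrable M (\<lambda>x. exp (l * h x))"
    by (rule integrable_exp_mult_bounded[OF hm hB])
  have grad_g: "(norm (grad g x))\<^sup>2 = (l/2)\<^sup>2 * exp (l * h x) * (norm (grad h x))\<^sup>2" for x
  proof -
    have "grad g x = ((l/2) * g x) *\<^sub>R grad h x"
      unfolding g_def by (rule grad_exp_scaled)
    then have "(norm (grad g x))\<^sup>2 = (l/2)\<^sup>2 * (g x)\<^sup>2 * (norm (grad h x))\<^sup>2"
      by (simp only: norm_scaleR real_norm_def power_mult_distrib power2_abs)
    then show ?thesis
      by (simp only: g2)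
  qed
  have grad_g_le: "AE x in M. (norm (grad g x))\<^sup>2 \<le> (l/2)\<^sup>2 * exp (l * h x)"
    using ae by eventually_elim (simp add: grad_g mult_left_le power_le_one)
  have int_grad_g: "integrable M (\<lambda>x. (norm (grad g x))\<^sup>2)"
  proof (rule Bochner_Integration.integrable_bound)
    show "integrable M (\<lambda>x. (l/2)\<^sup>2 * exp (l * h x))"
      using int_exp by simp
    show "AE x in M. norm ((norm (grad g x))\<^sup>2) \<le> norm ((l/2)\<^sup>2 * exp (l * h x))"
      using grad_g_le by eventually_elim simp
    show "(\<lambda>x. (norm (grad g x))\<^sup>2) \<in> borel_measurable M"
      unfolding grad_g by measurable
  qed
  have g_lip: "(exp (\<bar>l/2\<bar> * B) * (\<bar>l/2\<bar> * L))-lipschitz_on UNIV g"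
    unfolding g_def by (rule lipschitz_on_exp_comp_bounded[OF Lh hB])
  have "g \<in> H1 M"
    unfolding H1_def
  proof (intro CollectI conjI allI)
    show "\<exists>e>0. \<exists>L. L-lipschitz_on (ball x e) g" for x
      using lipschitz_on_subset[OF g_lip, of "ball x 1"] by (intro exI[of _ 1] conjI exI) auto
    show "integrable M (\<lambda>x. (g x)\<^sup>2)"
      unfolding g2 by (rule int_exp)
  qed (rule int_grad_g)
  have "(\<integral>x. exp (l * h x) * ln (exp (l * h x)) \<partial>M) = l * (\<integral>x. h x * exp (l * h x) \<partial>M)"
    by (simp add: mult_ac)
  then have "l * (\<integral>x. h x * exp (l * h x) \<partial>M) - (\<integral>x. exp (l * h x) \<partial>M) * ln (\<integral>x. exp (l * h x) \<partial>M)
      = Ent M (\<lambda>x. (g x)\<^sup>2)"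
    unfolding Ent_def g2 by simp
  also have "\<dots> \<le> \<alpha> * (\<integral>x. (norm (grad g x))\<^sup>2 \<partial>M)"
    using \<open>g \<in> H1 M\<close> LSI unfolding LSI_def by (auto simp: g_def)
  also have "\<dots> \<le> \<alpha> * (\<integral>x. (l/2)\<^sup>2 * exp (l * h x) \<partial>M)"
    using int_grad_g int_exp grad_g_le constant_nonneg
    by (intro mult_left_mono integral_mono_AE) auto
  also have "\<dots> = \<alpha> * l\<^sup>2 / 4 * (\<integral>x. exp (l * h x) \<partial>M)"
    by (simp add: power_divide)
  finally show ?thesis .
qed

lemma mgf_le_of_bounded_pos:
  fixes h :: "'a \<Rightarrow> real"
  assumes Lh: "L-lipschitz_on UNIV h" and hB: "\<And>x. \<bar>h x\<bar> \<le> B"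
    and gm: "(\<lambda>x. norm (grad h x)) \<in> borel_measurable borel"
    and ae: "AE x in M. norm (grad h x) \<le> 1" and "l > 0"
  shows "(\<integral>x. exp (l * h x) \<partial>M) \<le> exp (l * (\<integral>x. h x \<partial>M) + \<alpha> * l\<^sup>2 / 4)"
proof -
  have hm: "h \<in> borel_measurable M"
    using Lh by (intro borel_measurable_continuous lipschitz_on_continuous_on)
  define \<Phi> where "\<Phi> t = (\<integral>x. exp (t * h x) \<partial>M)" for t
  define \<Phi>' where "\<Phi>' t = (\<integral>x. h x * exp (t * h x) \<partial>M)" for t
  define m where "m = (\<integral>x. h x \<partial>M)"
  have \<Phi>_pos: "\<Phi> t > 0" for t
  proof -
    have "- (\<bar>t\<bar> * B) \<le> t * h x" for x
      using mult_le_abs_bound[OF hB[of x], of "-t"] by simp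
    then have "exp (- (\<bar>t\<bar> * B)) \<le> \<Phi> t"
      unfolding \<Phi>_def using integrable_exp_mult_bounded[OF hm hB]
      by (intro integral_ge_const AE_I2) auto
    then show ?thesis
      using exp_gt_zero order_less_le_trans by blast
  qed
  define G where "G t = ln (\<Phi> t) - t * m - \<alpha> * t\<^sup>2 / 4" for t
  define G' where "G' t = \<Phi>' t / \<Phi> t - m - \<alpha> * t / 2" for t
  have "(G has_real_derivative G' t) (at t)" for t
    unfolding G_def[abs_def] G'_def \<Phi>_def \<Phi>'_def
    using \<Phi>_pos[unfolded \<Phi>_def] has_real_derivative_mgf[OF hm hB]
    by (auto intro!: derivative_eq_intros simp: field_simps)
  moreover have "G 0 = 0" "G' 0 = 0"
    by (simp_all add: G_def G'_def \<Phi>_def \<Phi>'_def m_def prob_space)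
  moreover have "t * G' t - G t \<le> 0" if "t > 0" for t
  proof -
    have "t * G' t - G t = (t * \<Phi>' t - \<Phi> t * ln (\<Phi> t)) / \<Phi> t - \<alpha> * t\<^sup>2 / 4"
      using \<Phi>_pos[of t] by (simp add: G_def G'_def field_simps power2_eq_square)
    also have "\<dots> \<le> (\<alpha> * t\<^sup>2 / 4 * \<Phi> t) / \<Phi> t - \<alpha> * t\<^sup>2 / 4"
      unfolding \<Phi>_def \<Phi>'_def using entropy_mgf_le[OF Lh hB gm ae] \<Phi>_pos[of t]
      by (intro diff_right_mono divide_right_mono) (auto simp: \<Phi>_def)
    finally show ?thesis
      using \<Phi>_pos[of t] by simp
  qed
  ultimately have "G l \<le> 0"
    using \<open>l > 0\<close> by (rule nonpos_of_deriv_quotient_nonpos)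
  then have "ln (\<Phi> l) \<le> l * m + \<alpha> * l\<^sup>2 / 4"
    by (simp add: G_def)
  then show ?thesis
    using \<Phi>_pos[of l] unfolding \<Phi>_def m_def by (metis exp_le_cancel_iff exp_ln)
qed

lemma mgf_le_of_bounded:
  fixes h :: "'a \<Rightarrow> real"
  assumes Lh: "L-lipschitz_on UNIV h" and hB: "\<And>x. \<bar>h x\<bar> \<le> B"
    and gm: "(\<lambda>x. norm (grad h x)) \<in> borel_measurable borel"
    and ae: "AE x in M. norm (grad h x) \<le> 1"
  shows "(\<integral>x. exp (l * h x) \<partial>M) \<le> exp (l * (\<integral>x. h x \<partial>M) + \<alpha> * l\<^sup>2 / 4)"
proof -
  consider "l > 0" | "l = 0" | "l < 0"
    by linarith
  then show ?thesis
  proof cases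
    case 1
    then show ?thesis
      by (rule mgf_le_of_bounded_pos[OF assms])
  next
    case 2
    then show ?thesis
      by (simp add: prob_space)
  next
    case 3
    have hB': "\<bar>- h x\<bar> \<le> B" for x
      using hB[of x] by simp
    have grad_norm: "norm (grad (\<lambda>x. - h x) x) = norm (grad h x)" for x
      by (simp add: grad_uminus)
    have "(\<integral>x. exp ((-l) * (- h x)) \<partial>M) \<le> exp ((-l) * (\<integral>x. - h x \<partial>M) + \<alpha> * (-l)\<^sup>2 / 4)"
      by (rule mgf_le_of_bounded_pos[OF lipschitz_on_minus[OF Lh] hB'])
         (use gm ae 3 in \<open>simp_all add: grad_norm\<close>)
    then show ?thesis
      by simp
  qed
qed

lemma mgf_centered_le_of_bounded:
  fixes h :: "'a \<Rightarrow> real"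
  assumes Lh: "L-lipschitz_on UNIV h" and hB: "\<And>x. \<bar>h x\<bar> \<le> B"
    and gm: "(\<lambda>x. norm (grad h x)) \<in> borel_measurable borel"
    and ae: "AE x in M. norm (grad h x) \<le> 1"
  shows "integrable M (\<lambda>x. exp (l * (h x - (\<integral>y. h y \<partial>M))))"
    and "(\<integral>x. exp (l * (h x - (\<integral>y. h y \<partial>M))) \<partial>M) \<le> exp (\<alpha> * l\<^sup>2 / 4)"
proof -
  let ?c = "\<integral>y. h y \<partial>M"
  have hm: "h \<in> borel_measurable M"
    using Lh by (intro borel_measurable_continuous lipschitz_on_continuous_on)
  have eq: "exp (l * (h x - ?c)) = exp (- (l * ?c)) * exp (l * h x)" for x
    by (simp add: right_diff_distrib flip: exp_add)
  show "integrable M (\<lambda>x. exp (l * (h x - ?c)))"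
    unfolding eq by (intro integrable_mult_right integrable_exp_mult_bounded[OF hm hB])
  have "(\<integral>x. exp (l * (h x - ?c)) \<partial>M) = exp (- (l * ?c)) * (\<integral>x. exp (l * h x) \<partial>M)"
    unfolding eq by simp
  also have "\<dots> \<le> exp (- (l * ?c)) * exp (l * ?c + \<alpha> * l\<^sup>2 / 4)"
    by (intro mult_left_mono mgf_le_of_bounded[OF assms]) simp
  also have "\<dots> = exp (\<alpha> * l\<^sup>2 / 4)"
    by (simp flip: exp_add)
  finally show "(\<integral>x. exp (l * (h x - ?c)) \<partial>M) \<le> exp (\<alpha> * l\<^sup>2 / 4)" .
qed

lemma mgf_clamp_le:
  fixes f :: "'a \<Rightarrow> real"
  assumes Lf: "L-lipschitz_on UNIV f"
    and gm: "(\<lambda>x. norm (grad f x)) \<in> borel_measurable borel"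
    and ae: "AE x in M. norm (grad f x) \<le> 1"
  shows "integrable M (\<lambda>x. exp (l * (clamp (real n) (f x) - (\<integral>y. clamp (real n) (f y) \<partial>M))))"
    and "(\<integral>x. exp (l * (clamp (real n) (f x) - (\<integral>y. clamp (real n) (f y) \<partial>M))) \<partial>M)
         \<le> exp (\<alpha> * l\<^sup>2 / 4)"
proof -
  have fc: "continuous_on UNIV f"
    using Lf by (rule lipschitz_on_continuous_on)
  have [measurable]: "f \<in> borel_measurable borel"
    using fc by (rule borel_measurable_continuous_onI)
  have grad_eq: "norm (grad (\<lambda>x. clamp (real n) (f x)) x)
      = (if \<bar>f x\<bar> < real n then norm (grad f x) else 0)" for x
    using grad_clamp[OF fc, of "real n" x] by simp
  have grad_meas: "(\<lambda>x. norm (grad (\<lambda>x. clamp (real n) (f x)) x)) \<in> borel_measurable borel"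
    unfolding grad_eq using gm by measurable
  have grad_le: "AE x in M. norm (grad (\<lambda>x. clamp (real n) (f x)) x) \<le> 1"
    using ae by eventually_elim (simp add: grad_eq)
  have bound: "\<bar>clamp (real n) (f x)\<bar> \<le> real n" for x
    by (rule abs_clamp_le) simp
  show "integrable M (\<lambda>x. exp (l * (clamp (real n) (f x) - (\<integral>y. clamp (real n) (f y) \<partial>M))))"
    and "(\<integral>x. exp (l * (clamp (real n) (f x) - (\<integral>y. clamp (real n) (f y) \<partial>M))) \<partial>M)
         \<le> exp (\<alpha> * l\<^sup>2 / 4)"
    by (rule mgf_centered_le_of_bounded[OF lipschitz_on_clamp[OF Lf] bound grad_meas grad_le])+
qed

lemma bounded_range_mean_clamp:
  fixes f :: "'a \<Rightarrow> real"
  assumes Lf: "L-lipschitz_on UNIV f"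
    and gm: "(\<lambda>x. norm (grad f x)) \<in> borel_measurable borel"
    and ae: "AE x in M. norm (grad f x) \<le> 1"
  shows "bounded (range (\<lambda>n. \<integral>x. clamp (real n) (f x) \<partial>M))"
proof -
  define c where "c n = (\<integral>x. clamp (real n) (f x) \<partial>M)" for n
  have fm[measurable]: "f \<in> borel_measurable M"
    using Lf by (intro borel_measurable_continuous lipschitz_on_continuous_on)
  obtain K :: nat where K: "prob {x \<in> space M. \<bar>f x\<bar> \<le> real K} > 0"
    using ex_prob_abs_le_pos[OF fm] by blast
  define A where "A = {x \<in> space M. \<bar>f x\<bar> \<le> real K}"
  have "\<bar>c n\<bar> \<le> real K + \<alpha> / 4 - ln (prob A)" for n
  proof (cases "K \<le> n")
    case True
    have "x \<in> A \<Longrightarrow> \<bar>clamp (real n) (f x)\<bar> \<le> real K" for x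
      using True by (auto simp: A_def clamp_eq_self)
    with K show ?thesis
      unfolding c_def by (intro abs_center_le_of_mgf_le[OF _ _ _ mgf_clamp_le[OF assms]]) (auto simp: A_def)
  next
    case False
    have bound: "\<bar>clamp (real n) (f x)\<bar> \<le> real n" for x
      by (rule abs_clamp_le) simp
    have "(\<lambda>x. clamp (real n) (f x)) \<in> borel_measurable M"
      unfolding clamp_def by measurable
    with bound have "integrable M (\<lambda>x. clamp (real n) (f x))"
      by (intro integrable_const_bound[where B="real n"]) auto
    have "\<bar>c n\<bar> \<le> (\<integral>x. \<bar>clamp (real n) (f x)\<bar> \<partial>M)"
      unfolding c_def using integral_norm_bound[of M "\<lambda>x. clamp (real n) (f x)"] by simp
    also have "\<dots> \<le> (\<integral>x. real n \<partial>M)"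
      by (rule integral_mono) (use \<open>integrable M (\<lambda>x. clamp (real n) (f x))\<close> bound in auto)
    finally have "\<bar>c n\<bar> \<le> real n"
      by (simp add: prob_space)
    moreover have "ln (prob A) \<le> 0"
      using K by (simp add: A_def)
    ultimately show ?thesis
      using False constant_nonneg by simp
  qed
  then show ?thesis
    unfolding c_def[symmetric] by (auto simp: bounded_iff intro!: exI[of _ "real K + \<alpha> / 4 - ln (prob A)"])
qed

lemma mgf_le_of_lipschitz:
  fixes f :: "'a \<Rightarrow> real"
  assumes Lf: "L-lipschitz_on UNIV f"
    and gm: "(\<lambda>x. norm (grad f x)) \<in> borel_measurable borel"
    and ae: "AE x in M. norm (grad f x) \<le> 1"
  obtains c where "\<And>l. (\<integral>\<^sup>+x. ennreal (exp (l * (f x - c))) \<partial>M) \<le> ennreal (exp (\<alpha> * l\<^sup>2 / 4))"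
proof -
  define c where "c n = (\<integral>x. clamp (real n) (f x) \<partial>M)" for n
  have [measurable]: "f \<in> borel_measurable M"
    using Lf by (intro borel_measurable_continuous lipschitz_on_continuous_on)
  obtain c0 r where r: "strict_mono r" and c0: "(c \<circ> r) \<longlonglongrightarrow> c0"
    using bounded_range_mean_clamp[OF assms, folded c_def] bounded_imp_convergent_subsequence by blast
  show ?thesis
  proof (rule that)
    fix l :: real
    define u where "u k x = ennreal (exp (l * (clamp (real (r k)) (f x) - c (r k))))" for k x
    show "(\<integral>\<^sup>+x. ennreal (exp (l * (f x - c0))) \<partial>M) \<le> ennreal (exp (\<alpha> * l\<^sup>2 / 4))"
    proof (rule nn_integral_le_of_tendsto[of u])
      show "u k \<in> borel_measurable M" for k
        unfolding u_def clamp_def by measurable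
      show "(\<lambda>k. u k x) \<longlonglongrightarrow> ennreal (exp (l * (f x - c0)))" for x
        unfolding u_def using LIMSEQ_subseq_LIMSEQ[OF LIMSEQ_clamp r] c0
        by (auto intro!: tendsto_intros simp: o_def)
      show "(\<integral>\<^sup>+x. u k x \<partial>M) \<le> ennreal (exp (\<alpha> * l\<^sup>2 / 4))" for k
        unfolding u_def c_def using mgf_clamp_le[OF assms, of l "r k"]
        by (simp add: nn_integral_eq_integral ennreal_leI)
    qed
  qed
qed

end

section \<open>Concentration of empirical means\<close>

context prob_space
begin

lemma nn_integral_exp_sum_le:
  fixes X :: "nat \<Rightarrow> 'a \<Rightarrow> real"
  assumes indep: "indep_vars (\<lambda>_. borel) X I" and "finite I" and "B \<ge> 0"
    and mgf: "\<And>k. k \<in> I \<Longrightarrow> (\<integral>\<^sup>+\<omega>. ennreal (exp (l * X k \<omega>)) \<partial>M) \<le> ennreal B"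
  shows "(\<integral>\<^sup>+\<omega>. ennreal (exp (l * (\<Sum>k\<in>I. X k \<omega>))) \<partial>M) \<le> ennreal (B ^ card I)"
proof -
  have "(\<integral>\<^sup>+\<omega>. ennreal (exp (l * (\<Sum>k\<in>I. X k \<omega>))) \<partial>M)
        = (\<integral>\<^sup>+\<omega>. (\<Prod>k\<in>I. ennreal (exp (l * X k \<omega>))) \<partial>M)"
    using \<open>finite I\<close> by (simp add: sum_distrib_left exp_sum prod_ennreal)
  also have "\<dots> = (\<Prod>k\<in>I. \<integral>\<^sup>+\<omega>. ennreal (exp (l * X k \<omega>)) \<partial>M)"
    using indep_vars_compose2[OF indep, of "\<lambda>k x. ennreal (exp (l * x))"] \<open>finite I\<close>
    by (intro indep_vars_nn_integral) auto
  also have "\<dots> \<le> (\<Prod>k\<in>I. ennreal B)"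
    using mgf by (intro prod_mono_ennreal)
  also have "\<dots> = ennreal (B ^ card I)"
    using \<open>B \<ge> 0\<close> by (simp add: ennreal_power)
  finally show ?thesis .
qed

lemma prob_mean_ge_le:
  fixes X :: "nat \<Rightarrow> 'a \<Rightarrow> real"
  assumes indep: "indep_vars (\<lambda>_. borel) X {1..n}" and "n \<ge> 1"
    and mgf: "\<And>k l. k \<in> {1..n} \<Longrightarrow>
      (\<integral>\<^sup>+\<omega>. ennreal (exp (l * (X k \<omega> - c))) \<partial>M) \<le> ennreal (\<kappa> * exp (\<alpha> * l\<^sup>2 / 4))"
    and "\<kappa> \<ge> 1" and "\<alpha> > 0" and "r > 0" and ce: "c - e \<le> sqrt (\<alpha> * ln \<kappa>)"
  shows "prob {\<omega> \<in> space M. (1 / real n) * (\<Sum>k=1..n. X k \<omega>) - e \<ge> r + 2 * sqrt (\<alpha> * ln \<kappa>)}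
         \<le> exp (- real n * r\<^sup>2 / \<alpha>)"
proof -
  define s where "s = sqrt (\<alpha> * ln \<kappa>)"
  define t where "t = r + s"
  define \<theta> where "\<theta> = 2 * t / \<alpha>"
  define S where "S \<omega> = (\<Sum>k=1..n. X k \<omega> - c)" for \<omega>
  have [measurable]: "X k \<in> borel_measurable M" if "k \<in> {1..n}" for k
    using indep that unfolding indep_vars_def by auto
  have S_meas[measurable]: "S \<in> borel_measurable M"
    unfolding S_def by measurable
  have "s \<ge> 0" and s2: "s\<^sup>2 = \<alpha> * ln \<kappa>"
    using \<open>\<alpha> > 0\<close> \<open>\<kappa> \<ge> 1\<close> by (simp_all add: s_def)
  then have "\<theta> > 0" and t2: "r\<^sup>2 + \<alpha> * ln \<kappa> \<le> t\<^sup>2"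
    using \<open>\<alpha> > 0\<close> \<open>r > 0\<close> by (auto simp: \<theta>_def t_def power2_eq_square algebra_simps)
  have subset: "{\<omega> \<in> space M. (1 / real n) * (\<Sum>k=1..n. X k \<omega>) - e \<ge> r + 2 * s}
      \<subseteq> {\<omega> \<in> space M. S \<omega> \<ge> real n * t}"
  proof safe
    fix \<omega> assume "\<omega> \<in> space M" "r + 2 * s \<le> 1 / real n * (\<Sum>k=1..n. X k \<omega>) - e"
    then have "real n * (r + 2 * s + e) \<le> (\<Sum>k=1..n. X k \<omega>)"
      using \<open>n \<ge> 1\<close> by (simp add: field_simps)
    moreover have "real n * (r + s + c) \<le> real n * (r + 2 * s + e)"
      using ce by (intro mult_left_mono) (auto simp: s_def)
    ultimately show "real n * t \<le> S \<omega>"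
      by (simp add: S_def t_def sum_subtractf algebra_simps)
  qed
  have "emeasure M {\<omega> \<in> space M. S \<omega> \<ge> real n * t}
      \<le> ennreal (exp (- \<theta> * (real n * t))) * (\<integral>\<^sup>+\<omega>. ennreal (exp (\<theta> * S \<omega>)) * indicator (space M) \<omega> \<partial>M)"
    using \<open>\<theta> > 0\<close> by (intro Chernoff_ineq_nn_integral_ge) auto
  also have "(\<integral>\<^sup>+\<omega>. ennreal (exp (\<theta> * S \<omega>)) * indicator (space M) \<omega> \<partial>M)
      = (\<integral>\<^sup>+\<omega>. ennreal (exp (\<theta> * (\<Sum>k\<in>{1..n}. X k \<omega> - c))) \<partial>M)"
    by (intro nn_integral_cong) (simp add: S_def)
  also have "ennreal (exp (- \<theta> * (real n * t))) * \<dots>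
      \<le> ennreal (exp (- \<theta> * (real n * t))) * ennreal ((\<kappa> * exp (\<alpha> * \<theta>\<^sup>2 / 4)) ^ card {1..n})"
    using indep_vars_compose2[OF indep, of "\<lambda>k x. x - c"] mgf \<open>\<kappa> \<ge> 1\<close>
    by (intro mult_left_mono nn_integral_exp_sum_le) auto
  also have "\<dots> \<le> ennreal (exp (- real n * r\<^sup>2 / \<alpha>))"
    using exp_chernoff_bound_le[OF \<open>\<alpha> > 0\<close> _ t2, of n] \<open>\<kappa> \<ge> 1\<close>
    by (simp add: \<theta>_def ennreal_mult'[symmetric] ennreal_leI)
  finally have "prob {\<omega> \<in> space M. S \<omega> \<ge> real n * t} \<le> exp (- real n * r\<^sup>2 / \<alpha>)"
    by (simp add: emeasure_eq_measure)
  moreover have "prob {\<omega> \<in> space M. (1 / real n) * (\<Sum>k=1..n. X k \<omega>) - e \<ge> r + 2 * s}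
      \<le> prob {\<omega> \<in> space M. S \<omega> \<ge> real n * t}"
    using subset by (intro finite_measure_mono) measurable
  ultimately show ?thesis
    by (simp add: s_def)
qed

lemma prob_abs_ge_le:
  fixes X :: "'a \<Rightarrow> real"
  assumes [measurable]: "X \<in> borel_measurable M"
  shows "prob {\<omega> \<in> space M. \<bar>X \<omega>\<bar> \<ge> a}
         \<le> prob {\<omega> \<in> space M. X \<omega> \<ge> a} + prob {\<omega> \<in> space M. - X \<omega> \<ge> a}"
proof -
  have "{\<omega> \<in> space M. \<bar>X \<omega>\<bar> \<ge> a} = {\<omega> \<in> space M. X \<omega> \<ge> a} \<union> {\<omega> \<in> space M. - X \<omega> \<ge> a}"
    by (auto simp: abs_if)
  then show ?thesis
    by (simp add: measure_Un_le)
qed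

lemma prob_abs_mean_ge_le:
  fixes X :: "nat \<Rightarrow> 'a \<Rightarrow> real"
  assumes indep: "indep_vars (\<lambda>_. borel) X {1..n}" and "n \<ge> 1"
    and mgf: "\<And>k l. k \<in> {1..n} \<Longrightarrow>
      (\<integral>\<^sup>+\<omega>. ennreal (exp (l * (X k \<omega> - c))) \<partial>M) \<le> ennreal (\<kappa> * exp (\<alpha> * l\<^sup>2 / 4))"
    and "\<kappa> \<ge> 1" and "\<alpha> > 0" and "r > 0" and ce: "\<bar>c - e\<bar> \<le> sqrt (\<alpha> * ln \<kappa>)"
  shows "prob {\<omega> \<in> space M. \<bar>(1 / real n) * (\<Sum>k=1..n. X k \<omega>) - e\<bar> \<ge> r + 2 * sqrt (\<alpha> * ln \<kappa>)}
         \<le> 2 * exp (- real n * r\<^sup>2 / \<alpha>)"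
proof -
  have [measurable]: "X k \<in> borel_measurable M" if "k \<in> {1..n}" for k
    using indep that unfolding indep_vars_def by auto
  have upper: "prob {\<omega> \<in> space M. (1 / real n) * (\<Sum>k=1..n. X k \<omega>) - e \<ge> r + 2 * sqrt (\<alpha> * ln \<kappa>)}
      \<le> exp (- real n * r\<^sup>2 / \<alpha>)"
    using ce by (intro prob_mean_ge_le[OF indep \<open>n \<ge> 1\<close> mgf \<open>\<kappa> \<ge> 1\<close> \<open>\<alpha> > 0\<close> \<open>r > 0\<close>]) auto
  have "prob {\<omega> \<in> space M. (1 / real n) * (\<Sum>k=1..n. - X k \<omega>) - (- e) \<ge> r + 2 * sqrt (\<alpha> * ln \<kappa>)}
      \<le> exp (- real n * r\<^sup>2 / \<alpha>)"
  proof (rule prob_mean_ge_le[where c="- c"])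
    show "indep_vars (\<lambda>_. borel) (\<lambda>k \<omega>. - X k \<omega>) {1..n}"
      using indep_vars_compose2[OF indep, of "\<lambda>k x. - x"] by simp
    show "(\<integral>\<^sup>+\<omega>. ennreal (exp (l * (- X k \<omega> - - c))) \<partial>M) \<le> ennreal (\<kappa> * exp (\<alpha> * l\<^sup>2 / 4))"
      if "k \<in> {1..n}" for k l
      using mgf[OF that, of "- l"] by (simp add: algebra_simps)
  qed (use ce \<open>n \<ge> 1\<close> \<open>\<kappa> \<ge> 1\<close> \<open>\<alpha> > 0\<close> \<open>r > 0\<close> in auto)
  then have lower: "prob {\<omega> \<in> space M. - ((1 / real n) * (\<Sum>k=1..n. X k \<omega>) - e) \<ge> r + 2 * sqrt (\<alpha> * ln \<kappa>)}
      \<le> exp (- real n * r\<^sup>2 / \<alpha>)"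
    by (simp add: sum_negf)
  have "prob {\<omega> \<in> space M. \<bar>(1 / real n) * (\<Sum>k=1..n. X k \<omega>) - e\<bar> \<ge> r + 2 * sqrt (\<alpha> * ln \<kappa>)}
      \<le> prob {\<omega> \<in> space M. (1 / real n) * (\<Sum>k=1..n. X k \<omega>) - e \<ge> r + 2 * sqrt (\<alpha> * ln \<kappa>)}
        + prob {\<omega> \<in> space M. - ((1 / real n) * (\<Sum>k=1..n. X k \<omega>) - e) \<ge> r + 2 * sqrt (\<alpha> * ln \<kappa>)}"
    by (rule prob_abs_ge_le) measurable
  with upper lower show ?thesis
    by linarith
qed

end

theorem corollary3p1:
  fixes P :: "'b measure"
    and Y :: "nat \<Rightarrow> 'b \<Rightarrow> 'a::euclidean_space"
    and M :: nat
    and m q :: "'a \<Rightarrow> real"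
    and \<alpha> \<kappa> :: real
    and f :: "'a \<Rightarrow> real"
  assumes "prob_space P"
    and "M \<ge> 1"
    and indep: "prob_space.indep_vars P (\<lambda>_. borel) Y {1..M}"
    and law: "\<And>k. k \<in> {1..M} \<Longrightarrow> distributed P lborel (Y k) (\<lambda>x. ennreal (m x))"
    and m_nonneg: "\<And>x. m x \<ge> 0"
    and "\<alpha> > 0" and "\<kappa> \<ge> 1"
    and q_meas: "q \<in> borel_measurable lborel"
    and q_nonneg: "\<And>x. q x \<ge> 0"
    and gamma_prob: "prob_space (density lborel (\<lambda>x. ennreal (q x)))"
    and lsi: "LSI (density lborel (\<lambda>x. ennreal (q x))) \<alpha>"
    and dom: "\<And>x. m x \<le> \<kappa> * q x"
    and f_lip: "\<exists>L. L-lipschitz_on UNIV f"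
    and f_grad: "grad_sup_norm f \<le> 1"
    and "r > 0"
  shows "prob_space.prob P
           {\<omega> \<in> space P. \<bar>(1 / real M) * (\<Sum>k=1..M. f (Y k \<omega>))
                             - prob_space.expectation P (\<lambda>\<omega>. f (Y 1 \<omega>))\<bar>
                          \<ge> r + 2 * sqrt (\<alpha> * ln \<kappa>)}
         \<le> 2 * exp (- real M * r\<^sup>2 / \<alpha>)"
proof -
  interpret P: prob_space P
    by (rule assms(1))
  define \<gamma> where "\<gamma> = density lborel (\<lambda>x. ennreal (q x))"
  interpret \<gamma>: log_sobolev \<gamma> \<alpha>
    unfolding log_sobolev_def log_sobolev_axioms_def
    using gamma_prob lsi \<open>\<alpha> > 0\<close> by (simp add: \<gamma>_def)
  obtain L where Lf: "L-lipschitz_on UNIV f"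
    using f_lip by blast
  have f_borel[measurable]: "f \<in> borel_measurable borel"
    using Lf by (intro borel_measurable_continuous_onI lipschitz_on_continuous_on)
  note grad_f = grad_sup_norm_le_oneD[OF f_grad]
  have "AE x in \<gamma>. norm (grad f x) \<le> 1"
    unfolding \<gamma>_def using q_meas grad_f(2) by (subst AE_density) (auto elim: AE_mp)
  then obtain c where c: "\<And>l. (\<integral>\<^sup>+x. ennreal (exp (l * (f x - c))) \<partial>\<gamma>) \<le> ennreal (exp (\<alpha> * l\<^sup>2 / 4))"
    using \<gamma>.mgf_le_of_lipschitz[OF Lf grad_f(1)] by blast
  have mgf: "(\<integral>\<^sup>+\<omega>. ennreal (exp (l * (f (Y k \<omega>) - c))) \<partial>P) \<le> ennreal (\<kappa> * exp (\<alpha> * l\<^sup>2 / 4))"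
    if "k \<in> {1..M}" for k l
    by (rule mgf_distributed_le_of_density[OF law[OF that] dom _ q_nonneg q_meas f_borel c[unfolded \<gamma>_def]])
       (use \<open>\<kappa> \<ge> 1\<close> in simp)
  have "Y 1 \<in> borel_measurable P"
    using law[of 1] \<open>M \<ge> 1\<close> by (simp add: distributed_def)
  then have "\<bar>c - P.expectation (\<lambda>\<omega>. f (Y 1 \<omega>))\<bar> \<le> sqrt (\<alpha> * ln \<kappa>)"
    using mgf \<open>M \<ge> 1\<close> \<open>\<kappa> \<ge> 1\<close> \<open>\<alpha> > 0\<close> by (intro P.abs_center_minus_expectation_le) auto
  moreover have "P.indep_vars (\<lambda>_. borel) (\<lambda>k \<omega>. f (Y k \<omega>)) {1..M}"
    using P.indep_vars_compose2[OF indep, of "\<lambda>k. f"] by simp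
  ultimately show ?thesis
    using mgf \<open>M \<ge> 1\<close> \<open>\<kappa> \<ge> 1\<close> \<open>\<alpha> > 0\<close> \<open>r > 0\<close> by (intro P.prob_abs_mean_ge_le) auto
qed

end
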